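(* Under the setting of the context, define for $(i,y)\in E\times\mathbb R^d$ $$b^{(m)}(i,y)=\sum_{u\in\mathcal V}p(i,y,u)\bigl[(v-g)(i,y+u/m)-(v-g)(i,y)\bigr],$$ and for $n\ge1$ $$Y_n=J_n+v(\xi_n,S_n/m)-\mathbb E\bigl[J_n+v(\xi_n,S_n/m)\mid\mathcal F_{n-1}\bigr].$$ Then for every $n\ge0$, $$S_{n+1}+v(\xi_{n+1},S_{n+1}/m)=S_n+v(\xi_n,S_n/m)+b^{(m)}(\xi_n,S_n/m)+Y_{n+1}.$$ In particular $(S_n+v(\xi_n,S_n/m))_{n\ge0}$ is a semimartingale. Moreover there exists a constant $C$, depending only on $E$, $P$ and $p$, such that $|b^{(m)}(i,y)|\le C/m$ for all $m\ge1$, $i\in E$, $y\in\mathbb R^d$.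
   Context: Let $d\ge1$, $(e_1,\dots,e_d)$ the canonical basis, $\mathcal V=\{\pm e_1,\dots,\pm e_d\}$. Let $E$ be a finite set and $P$ an irreducible and aperiodic stochastic matrix on $E$ with unique invariant probability $\mu$. For $k\in E$, $y\in\mathbb R^d$, $p(k,y,\cdot)$ is a probability on $\mathcal V$, with $y\mapsto p(k,y,u)$ twice continuously differentiable with bounded derivatives. Let $g(k,y)=\sum_u u\,p(k,y,u)$, assumed to satisfy $\sum_k\mu(k)g(k,y)=0$ for all $y$, and $v(i,y)=\sum_{n\ge0}\sum_{j\in E}P^n(i,j)g(j,y)$. For an integer $m\ge1$, $(\xi_n,J_n)_{n\ge0}$ is a process with $J_n\in\mathcal V$ for $n\ge1$, $S_0=0$, $S_{n+1}=S_n+J_{n+1}$, and with $\mathcal F_n=\sigma(\xi_0,\dots,\xi_n,J_0,\dots,J_n)$: $\mathbb P(\xi_{n+1}=k,J_{n+1}=u\mid\mathcal F_n)=P(\xi_n,k)p(\xi_n,S_n/m,u)$ for $k\in E$, $u\in\mathcal V$. *)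

theory Defs
  imports "HOL-Probability.Probability"
begin

definition Vset :: "(real ^ 'd) set" where
  "Vset = {axis i 1 | i. True} \<union> {axis i (-1) | i. True}"

fun mpow :: "('e::finite \<Rightarrow> 'e \<Rightarrow> real) \<Rightarrow> nat \<Rightarrow> 'e \<Rightarrow> 'e \<Rightarrow> real" where
  "mpow P 0 i j = (if i = j then 1 else 0)"
| "mpow P (Suc n) i j = (\<Sum>k\<in>UNIV. mpow P n i k * P k j)"

definition stochastic :: "('e::finite \<Rightarrow> 'e \<Rightarrow> real) \<Rightarrow> bool" where
  "stochastic P \<longleftrightarrow> (\<forall>i j. 0 \<le> P i j) \<and> (\<forall>i. (\<Sum>j\<in>UNIV. P i j) = 1)"

definition irreducible_mat :: "('e::finite \<Rightarrow> 'e \<Rightarrow> real) \<Rightarrow> bool" where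
  "irreducible_mat P \<longleftrightarrow> (\<forall>i j. \<exists>n. 0 < mpow P n i j)"

definition aperiodic_mat :: "('e::finite \<Rightarrow> 'e \<Rightarrow> real) \<Rightarrow> bool" where
  "aperiodic_mat P \<longleftrightarrow> (\<forall>i. Gcd {n. 0 < n \<and> 0 < mpow P n i i} = (1::nat))"

definition invariant_prob :: "('e::finite \<Rightarrow> 'e \<Rightarrow> real) \<Rightarrow> ('e \<Rightarrow> real) \<Rightarrow> bool" where
  "invariant_prob P \<mu> \<longleftrightarrow> (\<forall>i. 0 \<le> \<mu> i) \<and> (\<Sum>i\<in>UNIV. \<mu> i) = 1 \<and>
     (\<forall>j. (\<Sum>i\<in>UNIV. \<mu> i * P i j) = \<mu> j)"

definition gdrift :: "('e \<Rightarrow> real ^ 'd \<Rightarrow> real ^ 'd \<Rightarrow> real) \<Rightarrow> 'e \<Rightarrow> real ^ 'd \<Rightarrow> real ^ 'd" where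
  "gdrift p k y = (\<Sum>u\<in>Vset. p k y u *\<^sub>R u)"

definition vcorr :: "('e::finite \<Rightarrow> 'e \<Rightarrow> real) \<Rightarrow> ('e \<Rightarrow> real ^ 'd \<Rightarrow> real ^ 'd \<Rightarrow> real)
    \<Rightarrow> 'e \<Rightarrow> real ^ 'd \<Rightarrow> real ^ 'd" where
  "vcorr P p i y = (\<Sum>n. \<Sum>j\<in>UNIV. mpow P n i j *\<^sub>R gdrift p j y)"

definition bdrift :: "('e::finite \<Rightarrow> 'e \<Rightarrow> real) \<Rightarrow> ('e \<Rightarrow> real ^ 'd \<Rightarrow> real ^ 'd \<Rightarrow> real)
    \<Rightarrow> nat \<Rightarrow> 'e \<Rightarrow> real ^ 'd \<Rightarrow> real ^ 'd" where
  "bdrift P p m i y = (\<Sum>u\<in>Vset. p i y u *\<^sub>R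
      ((vcorr P p i (y + u /\<^sub>R real m) - gdrift p i (y + u /\<^sub>R real m))
       - (vcorr P p i y - gdrift p i y)))"

fun Spos :: "(nat \<Rightarrow> 'a \<Rightarrow> real ^ 'd) \<Rightarrow> nat \<Rightarrow> 'a \<Rightarrow> real ^ 'd" where
  "Spos J 0 x = 0"
| "Spos J (Suc n) x = Spos J n x + J (Suc n) x"

definition filt :: "'a measure \<Rightarrow> (nat \<Rightarrow> 'a \<Rightarrow> 'e) \<Rightarrow> (nat \<Rightarrow> 'a \<Rightarrow> real ^ 'd) \<Rightarrow> nat \<Rightarrow> 'a measure" where
  "filt M \<xi> J n = sigma (space M)
     (\<Union>k\<in>{..n}. {\<xi> k -` B \<inter> space M | B. True} \<union> {J k -` B \<inter> space M | B. B \<in> sets borel})"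

definition cond_exp_vec :: "'a measure \<Rightarrow> 'a measure \<Rightarrow> ('a \<Rightarrow> real ^ 'd) \<Rightarrow> 'a \<Rightarrow> real ^ 'd" where
  "cond_exp_vec M F f x = (\<chi> i. real_cond_exp M F (\<lambda>y. f y $ i) x)"

end

theory Submission
  imports Defs
begin

text \<open>Since P is irreducible and aperiodic, some power of P has all entries positive, so by
  Doeblin's argument the oscillation of P^n f decays geometrically; for f centred under \<mu> this
  bounds P^n f itself. Hence the series v = \<Sum>n P^n g converges, is bounded, inherits a Lipschitz
  constant in y from g, and solves the Poisson equation P v = v - g. The Markov property turns the
  conditional mean of J_{n+1} + v(\<xi>_{n+1}, S_{n+1}/m) given F_n into
  \<Sum>_k \<Sum>_u P(i,k) p(i,y,u) (u + v(k, y + u/m)) at (i, y) = (\<xi>_n, S_n/m), and the Poisson equation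
  rewrites this as v(i,y) + b^(m)(i,y); the decomposition is then an identity. Finally b^(m) averages
  increments of the Lipschitz function v - g over steps of length 1/m, whence |b^(m)| \<le> C/m.\<close>

section \<open>Matrix powers and primitivity\<close>

lemma mpow_add: "mpow P (a + b) i j = (\<Sum>k\<in>UNIV. mpow P a i k * mpow P b k j)"
proof (induction b arbitrary: j)
  case 0
  show ?case by (simp add: if_distrib[of "\<lambda>x. _ * x"] cong: if_cong)
next
  case (Suc b)
  have "mpow P (a + Suc b) i j = (\<Sum>l\<in>UNIV. \<Sum>k\<in>UNIV. mpow P a i k * mpow P b k l * P l j)"
    by (simp add: Suc sum_distrib_right)
  also have "\<dots> = (\<Sum>k\<in>UNIV. mpow P a i k * (\<Sum>l\<in>UNIV. mpow P b k l * P l j))"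
    by (subst sum.swap) (simp add: sum_distrib_left mult.assoc)
  finally show ?case by simp
qed

lemma mpow_1: "mpow P 1 = P"
  by (intro ext) (simp add: if_distrib[of "\<lambda>x. x * _"] cong: if_cong)

lemma stochastic_mpow:
  assumes "stochastic P"
  shows "stochastic (mpow P n)"
  unfolding stochastic_def
proof (induction n)
  case (Suc n)
  have "(\<Sum>j\<in>UNIV. mpow P (Suc n) i j) = (\<Sum>k\<in>UNIV. mpow P n i k * (\<Sum>j\<in>UNIV. P k j))" for i
    by (simp add: sum_distrib_left) (rule sum.swap)
  with Suc assms show ?case by (auto simp: stochastic_def intro!: sum_nonneg)
qed simp

lemma invariant_prob_mpow:
  assumes "invariant_prob P \<mu>"
  shows "invariant_prob (mpow P n) \<mu>"
  unfolding invariant_prob_def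
proof (induction n)
  case 0
  with assms show ?case by (simp add: invariant_prob_def if_distrib[of "\<lambda>x. _ * x"] cong: if_cong)
next
  case (Suc n)
  have "(\<Sum>i\<in>UNIV. \<mu> i * mpow P (Suc n) i j) = (\<Sum>k\<in>UNIV. (\<Sum>i\<in>UNIV. \<mu> i * mpow P n i k) * P k j)"
    for j by (simp add: sum_distrib_left sum_distrib_right mult.assoc) (rule sum.swap)
  with Suc assms show ?case by (simp add: invariant_prob_def)
qed

lemma mpow_mult_le_mpow_add:
  assumes "stochastic P"
  shows "mpow P a i k * mpow P b k j \<le> mpow P (a + b) i j"
  unfolding mpow_add using stochastic_mpow[OF assms]
  by (intro member_le_sum[where f = "\<lambda>k. mpow P a i k * mpow P b k j"])
     (auto simp: stochastic_def)

text \<open>The least positive difference d of two elements of S \<union> {0} divides every element of S,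
  so d = 1; if b and b + 1 lie in S \<union> {0}, every n > b * b is a combination of them.\<close>
lemma add_closed_Gcd_1_eventually:
  fixes S :: "nat set"
  assumes add: "\<And>a b. a \<in> S \<Longrightarrow> b \<in> S \<Longrightarrow> a + b \<in> S" and gcd: "Gcd S = 1"
  shows "\<forall>\<^sub>F n in sequentially. n \<in> S"
proof -
  define S0 where "S0 = insert 0 S"
  have add0: "a + b \<in> S0" if "a \<in> S0" "b \<in> S0" for a b
    using that add by (auto simp: S0_def)
  have mult0: "k * a \<in> S0" if "a \<in> S0" for k a
  proof (induction k)
    case 0
    show ?case by (simp add: S0_def)
  next
    case (Suc k)
    then show ?case using add0[OF that] by simp
  qed
  define D where "D = {d. 0 < d \<and> (\<exists>b\<in>S0. b + d \<in> S0)}"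
  obtain s where "s \<in> S" "s \<noteq> 0"
    using gcd by (metis Gcd_0_iff insertI1 subsetI zero_neq_one)
  then have "s \<in> D" by (auto simp: D_def S0_def)
  define d where "d = (LEAST d. d \<in> D)"
  have "d \<in> D" unfolding d_def by (rule LeastI) fact
  then obtain b where b: "b \<in> S0" "b + d \<in> S0" and d_pos: "0 < d" by (auto simp: D_def)
  have "d dvd s" if s: "s \<in> S" for s
  proof -
    define q r where "q = s div d" and "r = s mod d"
    have "s \<in> S0" using s by (simp add: S0_def)
    then have "s + q * b \<in> S0" "q * (b + d) \<in> S0"
      using b by (simp_all add: add0 mult0)
    moreover have "s + q * b = q * (b + d) + r"
      by (simp add: q_def r_def algebra_simps)
    ultimately have "r \<noteq> 0 \<Longrightarrow> r \<in> D" by (auto simp: D_def)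
    moreover have "r < d" using d_pos by (simp add: r_def)
    ultimately have "r = 0" using not_less_Least[of r "\<lambda>d. d \<in> D"] by (auto simp: d_def)
    then show ?thesis by (simp add: r_def mod_eq_0_iff_dvd)
  qed
  then have "d = 1" using gcd by (metis Gcd_greatest nat_dvd_1_iff_1)
  have "n \<in> S" if n: "b * b < n" for n
  proof -
    define q r where "q = n div b" and "r = n mod b"
    have "n = (q - r) * b + r * (b + 1)"
    proof (cases "b = 0")
      case False
      then have "r < b" "b \<le> q" using n by (simp_all add: r_def q_def less_eq_div_iff_mult_less_eq)
      then have "r \<le> q" by simp
      then show ?thesis by (simp add: q_def r_def algebra_simps diff_mult_distrib)
    qed (simp add: q_def r_def)
    then have "n \<in> S0" using b \<open>d = 1\<close> by (metis add0 mult0 Suc_eq_plus1)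
    then show ?thesis using n by (auto simp: S0_def)
  qed
  then show ?thesis unfolding eventually_sequentially by (meson Suc_le_lessD)
qed

lemma mpow_pos_eventually:
  assumes st: "stochastic P" and irr: "irreducible_mat P" and ap: "aperiodic_mat P"
  shows "\<forall>\<^sub>F n in sequentially. 0 < mpow P n i j"
proof -
  obtain r where r: "0 < mpow P r i j" using irr by (auto simp: irreducible_mat_def)
  have "\<forall>\<^sub>F n in sequentially. n \<in> {n. 0 < n \<and> 0 < mpow P n i i}"
  proof (rule add_closed_Gcd_1_eventually)
    fix a b assume "a \<in> {n. 0 < n \<and> 0 < mpow P n i i}" "b \<in> {n. 0 < n \<and> 0 < mpow P n i i}"
    then have "0 < mpow P a i i * mpow P b i i" "0 < a + b" by auto
    then show "a + b \<in> {n. 0 < n \<and> 0 < mpow P n i i}"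
      using mpow_mult_le_mpow_add[OF st, of a i i b i] by auto
  qed (use ap in \<open>simp add: aperiodic_mat_def\<close>)
  then have "\<forall>\<^sub>F n in sequentially. 0 < mpow P (n + r) i j"
  proof eventually_elim
    case (elim n)
    then have "0 < mpow P n i i * mpow P r i j" using r by simp
    also have "\<dots> \<le> mpow P (n + r) i j" by (rule mpow_mult_le_mpow_add[OF st])
    finally show ?case .
  qed
  then show ?thesis by (rule eventually_sequentially_seg[THEN iffD1])
qed

lemma stochastic_primitive:
  assumes "stochastic P" "irreducible_mat P" "aperiodic_mat P"
  obtains N where "0 < N" "\<And>i j. 0 < mpow P N i j"
proof -
  have "\<forall>\<^sub>F n in sequentially. 0 < n \<and> (\<forall>i j. 0 < mpow P n i j)"
    using mpow_pos_eventually[OF assms] eventually_gt_at_top[of 0]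
    by (auto intro!: eventually_conj eventually_all_finite)
  then show ?thesis using that eventually_happens'[OF sequentially_bot] by blast
qed

section \<open>Geometric ergodicity\<close>

definition matvec :: "('e::finite \<Rightarrow> 'e \<Rightarrow> real) \<Rightarrow> ('e \<Rightarrow> 'v::real_vector) \<Rightarrow> 'e \<Rightarrow> 'v" where
  "matvec A f i = (\<Sum>j\<in>UNIV. A i j *\<^sub>R f j)"

lemma matvec_mpow_add: "matvec (mpow P (a + b)) f = matvec (mpow P a) (matvec (mpow P b) f)"
proof
  fix i
  have "matvec (mpow P (a + b)) f i = (\<Sum>k\<in>UNIV. \<Sum>j\<in>UNIV. mpow P a i k *\<^sub>R mpow P b k j *\<^sub>R f j)"
    by (simp add: matvec_def mpow_add scaleR_sum_left) (rule sum.swap)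
  then show "matvec (mpow P (a + b)) f i = matvec (mpow P a) (matvec (mpow P b) f) i"
    by (simp add: matvec_def scaleR_sum_right)
qed

lemma matvec_mpow_Suc: "matvec (mpow P (Suc n)) f = matvec P (matvec (mpow P n) f)"
  using matvec_mpow_add[of P 1 n] unfolding mpow_1 by simp

definition osc :: "('e::finite \<Rightarrow> real) \<Rightarrow> real" where
  "osc f = Max (range f) - Min (range f)"

lemma osc_leI:
  fixes f :: "'e::finite \<Rightarrow> real"
  assumes "\<And>i i'. f i - f i' \<le> c"
  shows "osc f \<le> c"
proof -
  have "Max (range f) \<in> range f" "Min (range f) \<in> range f" by simp_all
  then obtain i i' where "Max (range f) = f i" "Min (range f) = f i'" by blast
  then show ?thesis using assms by (simp add: osc_def)
qed

lemma convex_comb_le_Max: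
  fixes w f :: "'e::finite \<Rightarrow> real"
  assumes "\<And>j. 0 \<le> w j"
  shows "(\<Sum>j\<in>UNIV. w j * f j) \<le> (\<Sum>j\<in>UNIV. w j) * Max (range f)"
  unfolding sum_distrib_right by (rule sum_mono) (simp add: assms mult_left_mono)

lemma convex_comb_ge_Min:
  fixes w f :: "'e::finite \<Rightarrow> real"
  assumes "\<And>j. 0 \<le> w j"
  shows "(\<Sum>j\<in>UNIV. w j) * Min (range f) \<le> (\<Sum>j\<in>UNIV. w j * f j)"
  unfolding sum_distrib_right by (rule sum_mono) (simp add: assms mult_left_mono)

lemma osc_matvec_le:
  assumes "stochastic A"
  shows "osc (matvec A f) \<le> osc f"
proof (rule osc_leI)
  fix i i'
  have "matvec A f i \<le> Max (range f)" "Min (range f) \<le> matvec A f i'"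
    using convex_comb_le_Max[of "A i" f] convex_comb_ge_Min[of "A i'" f] assms
    by (auto simp: stochastic_def matvec_def)
  then show "matvec A f i - matvec A f i' \<le> osc f" by (simp add: osc_def)
qed

text \<open>Doeblin's contraction: a uniform lower bound on the entries lets every row share the mass
  \<epsilon> per state, which cancels in differences of rows.\<close>
lemma osc_matvec_Doeblin:
  fixes A :: "'e::finite \<Rightarrow> 'e \<Rightarrow> real"
  assumes eps: "\<And>i j. \<epsilon> \<le> A i j" and rows: "\<And>i. (\<Sum>j\<in>UNIV. A i j) = 1"
  shows "osc (matvec A f) \<le> (1 - real CARD('e) * \<epsilon>) * osc f"
proof (rule osc_leI)
  fix i i'
  have split: "matvec A f k = \<epsilon> * (\<Sum>j\<in>UNIV. f j) + (\<Sum>j\<in>UNIV. (A k j - \<epsilon>) * f j)" for k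
    by (simp add: matvec_def algebra_simps sum_distrib_left sum_subtractf)
  have "(\<Sum>j\<in>UNIV. A k j - \<epsilon>) = 1 - real CARD('e) * \<epsilon>" for k
    by (simp add: sum_subtractf rows)
  then have "(\<Sum>j\<in>UNIV. (A i j - \<epsilon>) * f j) \<le> (1 - real CARD('e) * \<epsilon>) * Max (range f)"
    "(1 - real CARD('e) * \<epsilon>) * Min (range f) \<le> (\<Sum>j\<in>UNIV. (A i' j - \<epsilon>) * f j)"
    using convex_comb_le_Max[of "\<lambda>j. A i j - \<epsilon>" f] convex_comb_ge_Min[of "\<lambda>j. A i' j - \<epsilon>" f] eps
    by auto
  then show "matvec A f i - matvec A f i' \<le> (1 - real CARD('e) * \<epsilon>) * osc f"
    unfolding split osc_def by (simp add: right_diff_distrib)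
qed

lemma osc_nonneg: "0 \<le> osc (f :: 'e::finite \<Rightarrow> real)"
proof -
  have "Min (range f) \<le> f undefined" "f undefined \<le> Max (range f)" by simp_all
  then show ?thesis by (simp add: osc_def)
qed

lemma osc_mpow_block_decay:
  fixes P :: "'e::finite \<Rightarrow> 'e \<Rightarrow> real"
  assumes st: "stochastic P" and "irreducible_mat P" "aperiodic_mat P"
  obtains \<rho> N where "0 < \<rho>" "\<rho> < 1" "0 < N"
    "\<And>f n. osc (matvec (mpow P n) f) \<le> \<rho> ^ (n div N) * osc f"
proof -
  obtain N where N: "0 < N" "\<And>i j. 0 < mpow P N i j" using stochastic_primitive[OF assms] by blast
  define \<epsilon> where "\<epsilon> = Min (range (\<lambda>(i, j). mpow P N i j))"
  have eps: "\<epsilon> \<le> mpow P N i j" for i j unfolding \<epsilon>_def by (rule Min_le) auto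
  have "\<epsilon> \<in> range (\<lambda>(i, j). mpow P N i j)" unfolding \<epsilon>_def by (rule Min_in) auto
  then have "0 < \<epsilon>" using N(2) by auto
  \<comment> \<open>Kept away from 0, since the decay constant derived from \<rho> below divides by it.\<close>
  define \<rho> where "\<rho> = max (1 - real CARD('e) * \<epsilon>) (1/2)"
  have "0 < real CARD('e) * \<epsilon>" using \<open>0 < \<epsilon>\<close> by simp
  then have \<rho>: "0 < \<rho>" "\<rho> < 1" by (auto simp: \<rho>_def)
  have st_pow: "stochastic (mpow P n)" for n by (rule stochastic_mpow[OF st])
  have contract: "osc (matvec (mpow P N) f) \<le> \<rho> * osc f" for f
  proof -
    have "osc (matvec (mpow P N) f) \<le> (1 - real CARD('e) * \<epsilon>) * osc f"
      using st_pow[of N] by (intro osc_matvec_Doeblin eps) (simp add: stochastic_def)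
    also have "\<dots> \<le> \<rho> * osc f" unfolding \<rho>_def by (intro mult_right_mono osc_nonneg) simp
    finally show ?thesis .
  qed
  have blocks: "osc (matvec (mpow P (k * N + r)) f) \<le> \<rho> ^ k * osc f" for k r f
  proof (induction k)
    case 0
    show ?case using osc_matvec_le[OF st_pow] by simp
  next
    case (Suc k)
    have "osc (matvec (mpow P (Suc k * N + r)) f) = osc (matvec (mpow P N) (matvec (mpow P (k * N + r)) f))"
      by (simp add: add.assoc matvec_mpow_add)
    also have "\<dots> \<le> \<rho> * (\<rho> ^ k * osc f)"
      using contract Suc \<rho>(1) by (meson mult_left_mono order.trans less_imp_le)
    finally show ?case by simp
  qed
  have "osc (matvec (mpow P n) f) \<le> \<rho> ^ (n div N) * osc f" for n f
    using blocks[of "n div N" "n mod N" f] by simp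
  with that \<rho> N(1) show ?thesis by blast
qed

lemma power_div_le_root_power:
  fixes \<rho> :: real
  assumes "0 < \<rho>" "\<rho> \<le> 1" "0 < N"
  shows "\<rho> ^ (n div N) \<le> root N \<rho> ^ n / \<rho>"
proof -
  define \<sigma> where "\<sigma> = root N \<rho>"
  have \<sigma>: "0 < \<sigma>" "\<sigma> \<le> 1" "\<sigma> ^ N = \<rho>"
    using assms by (simp_all add: \<sigma>_def)
  have "\<sigma> ^ n = \<rho> ^ (n div N) * \<sigma> ^ (n mod N)"
    by (metis \<sigma>(3) div_mult_mod_eq power_add power_mult mult.commute)
  moreover have "\<sigma> ^ N \<le> \<sigma> ^ (n mod N)"
    using \<sigma> assms(3) by (intro power_decreasing) (simp_all add: less_imp_le)
  ultimately have "\<rho> ^ (n div N) * \<rho> \<le> \<sigma> ^ n"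
    using \<sigma> assms(1) by (metis mult_left_mono zero_le_power less_imp_le)
  then show ?thesis using assms(1) by (simp add: \<sigma>_def field_simps)
qed

lemma sum_invariant_matvec:
  assumes "invariant_prob A \<mu>"
  shows "(\<Sum>j\<in>UNIV. \<mu> j *\<^sub>R matvec A f j) = (\<Sum>j\<in>UNIV. \<mu> j *\<^sub>R f j)"
proof -
  have "(\<Sum>j\<in>UNIV. \<mu> j *\<^sub>R matvec A f j) = (\<Sum>k\<in>UNIV. (\<Sum>j\<in>UNIV. \<mu> j * A j k) *\<^sub>R f k)"
    by (simp add: matvec_def scaleR_sum_right scaleR_sum_left) (rule sum.swap)
  with assms show ?thesis by (simp add: invariant_prob_def)
qed

lemma abs_le_osc_if_centered:
  fixes f :: "'e::finite \<Rightarrow> real"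
  assumes "\<And>j. 0 \<le> \<mu> j" "(\<Sum>j\<in>UNIV. \<mu> j) = 1" "(\<Sum>j\<in>UNIV. \<mu> j * f j) = 0"
  shows "\<bar>f i\<bar> \<le> osc f"
proof -
  have "Min (range f) \<le> 0" "0 \<le> Max (range f)"
    using convex_comb_le_Max[of \<mu> f] convex_comb_ge_Min[of \<mu> f] assms by auto
  moreover have "Min (range f) \<le> f i" "f i \<le> Max (range f)" by simp_all
  ultimately show ?thesis unfolding osc_def abs_le_iff by linarith
qed

text \<open>Centring under \<mu> is preserved by P^n, so each component of P^n H is bounded by its
  oscillation.\<close>
lemma norm_matvec_mpow_centered_le:
  fixes P :: "'e::finite \<Rightarrow> 'e \<Rightarrow> real"
  assumes st: "stochastic P" and irr: "irreducible_mat P" and ap: "aperiodic_mat P"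
    and \<mu>: "invariant_prob P \<mu>"
  obtains K \<sigma> where "0 \<le> K" "0 \<le> \<sigma>" "\<sigma> < 1"
    "\<And>(H :: 'e \<Rightarrow> 'v::euclidean_space) B n i. (\<Sum>k\<in>UNIV. \<mu> k *\<^sub>R H k) = 0 \<Longrightarrow>
       (\<And>j. norm (H j) \<le> B) \<Longrightarrow> norm (matvec (mpow P n) H i) \<le> K * \<sigma> ^ n * B"
proof -
  obtain \<rho> N where \<rho>: "0 < \<rho>" "\<rho> < 1" and N: "0 < N"
    and decay: "\<And>f n. osc (matvec (mpow P n) f) \<le> \<rho> ^ (n div N) * osc f"
    using osc_mpow_block_decay[OF st irr ap] by blast
  define \<sigma> where "\<sigma> = root N \<rho>"
  have \<sigma>: "0 \<le> \<sigma>" "\<sigma> < 1" using \<rho> N by (simp_all add: \<sigma>_def)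
  have scalar: "\<bar>matvec (mpow P n) f i\<bar> \<le> 2 / \<rho> * \<sigma> ^ n * B"
    if f0: "(\<Sum>j\<in>UNIV. \<mu> j * f j) = 0" and fB: "\<And>j. \<bar>f j\<bar> \<le> B" for f :: "'e \<Rightarrow> real" and B n i
  proof -
    have "\<bar>matvec (mpow P n) f i\<bar> \<le> osc (matvec (mpow P n) f)"
      using \<mu> f0 sum_invariant_matvec[OF invariant_prob_mpow[OF \<mu>], of n f]
      by (intro abs_le_osc_if_centered[of \<mu>]) (auto simp: invariant_prob_def)
    also have "\<dots> \<le> \<rho> ^ (n div N) * osc f" by (rule decay)
    also have "\<dots> \<le> (\<sigma> ^ n / \<rho>) * (2 * B)"
    proof (rule mult_mono)
      show "\<rho> ^ (n div N) \<le> \<sigma> ^ n / \<rho>"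
        unfolding \<sigma>_def using \<rho> N by (intro power_div_le_root_power) simp_all
      show "osc f \<le> 2 * B" by (rule osc_leI) (use fB in \<open>smt (verit) abs_le_iff\<close>)
    qed (use \<rho> \<sigma> osc_nonneg in simp_all)
    finally show ?thesis by (simp add: field_simps)
  qed
  have "norm (matvec (mpow P n) H i) \<le> (real DIM('v) * (2 / \<rho>)) * \<sigma> ^ n * B"
    if H0: "(\<Sum>k\<in>UNIV. \<mu> k *\<^sub>R H k) = 0" and HB: "\<And>j. norm (H j) \<le> B"
    for H :: "'e \<Rightarrow> 'v" and B n i
  proof -
    have comp: "\<bar>matvec (mpow P n) H i \<bullet> b\<bar> \<le> 2 / \<rho> * \<sigma> ^ n * B" if "b \<in> Basis" for b
    proof -
      have "matvec (mpow P n) H i \<bullet> b = matvec (mpow P n) (\<lambda>j. H j \<bullet> b) i"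
        by (simp add: matvec_def inner_sum_left)
      moreover have "(\<Sum>j\<in>UNIV. \<mu> j * (H j \<bullet> b)) = 0"
        using arg_cong[OF H0, of "\<lambda>v. v \<bullet> b"] by (simp add: inner_sum_left)
      moreover have "\<bar>H j \<bullet> b\<bar> \<le> B" for j
        using HB[of j] Basis_le_norm[OF that] order.trans by blast
      ultimately show ?thesis using scalar by presburger
    qed
    have "norm (matvec (mpow P n) H i) \<le> (\<Sum>b\<in>Basis. \<bar>matvec (mpow P n) H i \<bullet> b\<bar>)"
      by (rule norm_le_l1)
    also have "\<dots> \<le> (\<Sum>b\<in>(Basis :: 'v set). 2 / \<rho> * \<sigma> ^ n * B)" by (rule sum_mono) (rule comp)
    finally show ?thesis by simp
  qed
  moreover have "0 \<le> real DIM('v) * (2 / \<rho>)" using \<rho> by simp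
  ultimately show ?thesis using that \<sigma> by blast
qed

section \<open>The potential series and the Poisson equation\<close>

definition potential :: "('e::finite \<Rightarrow> 'e \<Rightarrow> real) \<Rightarrow> ('e \<Rightarrow> 'v::real_normed_vector) \<Rightarrow> 'e \<Rightarrow> 'v"
  where "potential P H i = (\<Sum>n. matvec (mpow P n) H i)"

lemma summable_norm_le_geometric:
  fixes f :: "nat \<Rightarrow> 'a::banach"
  assumes bound: "\<And>n. norm (f n) \<le> c * \<sigma> ^ n" and \<sigma>: "0 \<le> \<sigma>" "\<sigma> < 1"
  shows "summable f" "norm (suminf f) \<le> c / (1 - \<sigma>)"
proof -
  have geo: "summable (\<lambda>n. c * \<sigma> ^ n)" using \<sigma> by (simp add: summable_geometric)
  have norms: "summable (\<lambda>n. norm (f n))" "summable f"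
    by (rule summable_comparison_test'[OF geo]; simp add: bound)+
  then show "summable f" by simp
  have "norm (suminf f) \<le> (\<Sum>n. norm (f n))" by (rule summable_norm[OF norms(1)])
  also have "\<dots> \<le> (\<Sum>n. c * \<sigma> ^ n)" by (rule suminf_le[OF bound norms(1) geo])
  also have "\<dots> = c / (1 - \<sigma>)" using \<sigma> by (simp add: suminf_mult suminf_geometric)
  finally show "norm (suminf f) \<le> c / (1 - \<sigma>)" .
qed

lemma potential_bound:
  fixes P :: "'e::finite \<Rightarrow> 'e \<Rightarrow> real"
  assumes "stochastic P" "irreducible_mat P" "aperiodic_mat P" "invariant_prob P \<mu>"
  obtains C where "0 \<le> C"
    "\<And>(H :: 'e \<Rightarrow> 'v::euclidean_space) B i. (\<Sum>k\<in>UNIV. \<mu> k *\<^sub>R H k) = 0 \<Longrightarrow>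
       (\<And>j. norm (H j) \<le> B) \<Longrightarrow>
       summable (\<lambda>n. matvec (mpow P n) H i) \<and> norm (potential P H i) \<le> C * B"
proof -
  obtain K \<sigma> where K: "0 \<le> K" "0 \<le> \<sigma>" "\<sigma> < 1"
    and decay: "\<And>(H :: 'e \<Rightarrow> 'v) B n i. (\<Sum>k\<in>UNIV. \<mu> k *\<^sub>R H k) = 0 \<Longrightarrow>
       (\<And>j. norm (H j) \<le> B) \<Longrightarrow> norm (matvec (mpow P n) H i) \<le> K * \<sigma> ^ n * B"
    using norm_matvec_mpow_centered_le[OF assms] by blast
  have "0 \<le> K / (1 - \<sigma>)" using K by simp
  moreover have "summable (\<lambda>n. matvec (mpow P n) H i) \<and> norm (potential P H i) \<le> K / (1 - \<sigma>) * B"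
    if "(\<Sum>k\<in>UNIV. \<mu> k *\<^sub>R H k) = 0" "\<And>j. norm (H j) \<le> B" for H :: "'e \<Rightarrow> 'v" and B i
  proof -
    have "norm (matvec (mpow P n) H i) \<le> (K * B) * \<sigma> ^ n" for n
      using decay[OF that] by (simp add: ac_simps)
    from summable_norm_le_geometric[OF this K(2,3)] show ?thesis
      by (simp add: potential_def)
  qed
  ultimately show ?thesis by (rule that)
qed

lemma matvec_diff: "matvec A (\<lambda>j. f j - g j) i = matvec A f i - matvec A g i"
  by (simp add: matvec_def scaleR_diff_right sum_subtractf)

lemma potential_diff:
  assumes "summable (\<lambda>n. matvec (mpow P n) H i)" "summable (\<lambda>n. matvec (mpow P n) H' i)"
  shows "potential P H i - potential P H' i = potential P (\<lambda>j. H j - H' j) i"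
  using suminf_diff[OF assms] by (simp add: potential_def matvec_diff)

lemma potential_Poisson:
  assumes summable: "\<And>k. summable (\<lambda>n. matvec (mpow P n) H k)"
  shows "matvec P (potential P H) i = potential P H i - H i"
proof -
  have "matvec P (potential P H) i = (\<Sum>k\<in>UNIV. \<Sum>n. P i k *\<^sub>R matvec (mpow P n) H k)"
    unfolding potential_def matvec_def[of P] by (simp add: suminf_scaleR_right[OF summable])
  also have "\<dots> = (\<Sum>n. matvec P (\<lambda>k. matvec (mpow P n) H k) i)"
    unfolding matvec_def[of P] by (rule suminf_sum[symmetric]) (intro summable_scaleR_right summable)
  also have "\<dots> = (\<Sum>n. matvec (mpow P (Suc n)) H i)"
    by (simp add: matvec_mpow_Suc)
  also have "\<dots> = potential P H i - H i"
    unfolding potential_def suminf_split_head[OF summable]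
    by (simp add: matvec_def if_distrib[of "\<lambda>x. x *\<^sub>R _"] cong: if_cong)
  finally show ?thesis .
qed

section \<open>Lipschitz bounds for the step distribution\<close>

lemma lipschitz_on_bounded_derivatives:
  fixes f :: "'i \<Rightarrow> 'a::real_normed_vector \<Rightarrow> 'b::real_normed_vector"
  assumes "finite I"
    and deriv: "\<And>i y. i \<in> I \<Longrightarrow> (f i has_derivative blinfun_apply (f' i y)) (at y)"
    and bounded: "\<And>i. i \<in> I \<Longrightarrow> bounded (range (f' i))"
  shows "\<exists>L. \<forall>i\<in>I. L-lipschitz_on UNIV (f i)"
proof -
  have "bounded (\<Union>i\<in>I. range (f' i))" by (intro bounded_UN ballI bounded assms(1))
  then obtain B where B: "\<And>i y. i \<in> I \<Longrightarrow> norm (f' i y) \<le> B"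
    unfolding bounded_iff by blast
  have "(max B 0)-lipschitz_on UNIV (f i)" if "i \<in> I" for i
    using deriv[OF that] B[OF that]
    by (intro bounded_derivative_imp_lipschitz) (auto simp: norm_blinfun.rep_eq[symmetric] le_max_iff_disj)
  then show ?thesis by blast
qed

lemma Vset_eq: "Vset = range (\<lambda>i. axis i 1) \<union> range (\<lambda>i. axis i (-1))"
  unfolding Vset_def by auto

lemma finite_Vset: "finite Vset"
  unfolding Vset_eq by simp

lemma norm_Vset:
  fixes u :: "real ^ 'd"
  shows "u \<in> Vset \<Longrightarrow> norm u = 1"
proof -
  have "axis i (-1::real) = - axis i 1" for i :: 'd by (simp add: vec_eq_iff axis_def)
  then show "u \<in> Vset \<Longrightarrow> norm u = 1" by (auto simp: Vset_eq)
qed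

lemma uniformly_lipschitz_step_probabilities:
  fixes p :: "'e::finite \<Rightarrow> real ^ 'd \<Rightarrow> real ^ 'd \<Rightarrow> real"
  assumes "\<And>k u y. u \<in> Vset \<Longrightarrow> ((\<lambda>z. p k z u) has_derivative blinfun_apply (Dp k u y)) (at y)"
    and "\<And>k u. u \<in> Vset \<Longrightarrow> bounded (range (Dp k u))"
  shows "\<exists>L. \<forall>k u. u \<in> Vset \<longrightarrow> L-lipschitz_on UNIV (\<lambda>y. p k y u)"
proof -
  have "\<exists>L. \<forall>ku\<in>UNIV \<times> Vset. L-lipschitz_on UNIV (\<lambda>y. p (fst ku) y (snd ku))"
    using assms by (intro lipschitz_on_bounded_derivatives[where f' = "\<lambda>ku. Dp (fst ku) (snd ku)"])
      (auto simp: finite_Vset)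
  then show ?thesis by auto
qed

lemma norm_gdrift_le_1:
  assumes "\<And>u. u \<in> Vset \<Longrightarrow> 0 \<le> p k y u" "(\<Sum>u\<in>Vset. p k y u) = 1"
  shows "norm (gdrift p k y) \<le> 1"
proof -
  have "norm (gdrift p k y) \<le> (\<Sum>u\<in>Vset. norm (p k y u *\<^sub>R u))"
    unfolding gdrift_def by (rule norm_sum)
  also have "\<dots> = 1" using assms by (simp add: norm_Vset)
  finally show ?thesis .
qed

lemma lipschitz_gdrift:
  fixes p :: "'e \<Rightarrow> real ^ 'd \<Rightarrow> real ^ 'd \<Rightarrow> real"
  assumes lip: "\<And>u. u \<in> Vset \<Longrightarrow> L-lipschitz_on UNIV (\<lambda>y. p k y u)"
  shows "(real (card (Vset :: (real ^ 'd) set)) * L)-lipschitz_on UNIV (gdrift p k)"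
proof (rule lipschitz_onI)
  have "axis undefined 1 \<in> (Vset :: (real ^ 'd) set)" by (auto simp: Vset_def)
  from lipschitz_on_nonneg[OF lip[OF this]]
  show "0 \<le> real (card (Vset :: (real ^ 'd) set)) * L" by simp
  fix y y' :: "real ^ 'd"
  have "dist (gdrift p k y) (gdrift p k y') = norm (\<Sum>u\<in>Vset. (p k y u - p k y' u) *\<^sub>R u)"
    by (simp add: gdrift_def dist_norm sum_subtractf scaleR_diff_left)
  also have "\<dots> \<le> (\<Sum>u\<in>Vset. norm ((p k y u - p k y' u) *\<^sub>R u))" by (rule norm_sum)
  also have "\<dots> \<le> (\<Sum>u\<in>(Vset :: (real ^ 'd) set). L * dist y y')"
    using lipschitz_onD[OF lip] by (intro sum_mono) (simp add: norm_Vset dist_real_def)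
  finally show "dist (gdrift p k y) (gdrift p k y') \<le> real (card (Vset :: (real ^ 'd) set)) * L * dist y y'"
    by simp
qed

lemma vcorr_eq_potential: "vcorr P p i y = potential P (\<lambda>j. gdrift p j y) i"
  by (simp add: vcorr_def potential_def matvec_def)

lemma norm_bdrift_le:
  assumes nonneg: "\<And>u. u \<in> Vset \<Longrightarrow> 0 \<le> p i y u" and sum1: "(\<Sum>u\<in>Vset. p i y u) = 1"
    and lip: "L-lipschitz_on UNIV (\<lambda>z. vcorr P p i z - gdrift p i z)"
  shows "norm (bdrift P p m i y) \<le> L / real m"
proof -
  define h where "h z = vcorr P p i z - gdrift p i z" for z
  have step: "norm (h (y + u /\<^sub>R real m) - h y) \<le> L / real m" if "u \<in> Vset" for u
  proof (cases "m = 0")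
    case False
    have "norm (h (y + u /\<^sub>R real m) - h y) \<le> L * norm (u /\<^sub>R real m)"
      using lipschitz_onD[OF lip, of "y + u /\<^sub>R real m" y] by (simp add: h_def dist_norm)
    also have "\<dots> = L / real m" using False norm_Vset[OF that] by (simp add: divide_inverse)
    finally show ?thesis .
  qed simp
  have "norm (bdrift P p m i y) \<le> (\<Sum>u\<in>Vset. norm (p i y u *\<^sub>R (h (y + u /\<^sub>R real m) - h y)))"
    unfolding bdrift_def h_def[symmetric] by (rule norm_sum)
  also have "\<dots> \<le> (\<Sum>u\<in>Vset. p i y u * (L / real m))"
    using mult_left_mono[OF step nonneg] nonneg by (intro sum_mono) simp
  also have "\<dots> = L / real m" unfolding sum_distrib_right[symmetric] sum1 by simp
  finally show ?thesis .
qed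

section \<open>Conditional expectations along the walk\<close>

lemma space_filt: "space (filt M \<xi> J n) = space M"
  unfolding filt_def by (rule space_measure_of_conv)

lemma sets_filt: "sets (filt M \<xi> J n) = sigma_sets (space M)
    (\<Union>k\<in>{..n}. {\<xi> k -` B \<inter> space M | B. True} \<union> {J k -` B \<inter> space M | B. B \<in> sets borel})"
  unfolding filt_def by (rule sets_measure_of) auto

lemma borel_measurable_J_filt: "k \<le> n \<Longrightarrow> J k \<in> borel_measurable (filt M \<xi> J n)"
  by (rule measurableI) (auto simp: space_filt sets_filt intro!: sigma_sets.Basic)

lemma borel_measurable_Spos_filt: "k \<le> n \<Longrightarrow> Spos J k \<in> borel_measurable (filt M \<xi> J n)"
proof (induction k)
  case 0
  have "Spos J 0 = (\<lambda>x. 0)" by (rule ext) simp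
  then show ?case by simp
next
  case (Suc k)
  then have "(\<lambda>x. Spos J k x + J (Suc k) x) \<in> borel_measurable (filt M \<xi> J n)"
    by (intro borel_measurable_add borel_measurable_J_filt) simp_all
  then show ?case by simp
qed

lemma subalgebra_filt:
  assumes "\<And>k. \<xi> k \<in> measurable M (count_space UNIV)" "\<And>k. J k \<in> borel_measurable M"
  shows "subalgebra M (filt M \<xi> J n)"
  unfolding subalgebra_def space_filt sets_filt
  using assms by (intro conjI sets.sigma_sets_subset) (auto intro: measurable_sets)

lemma (in finite_measure) real_cond_exp_finite_outcomes:
  assumes sub: "subalgebra M F"
    and A: "finite A" "\<And>z. z \<in> space M \<Longrightarrow> X z \<in> A"
    and X_meas: "\<And>a. {z \<in> space M. X z = a} \<in> sets M"
    and h_meas: "\<And>a. h a \<in> borel_measurable F"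
    and h_bound: "\<And>a z. a \<in> A \<Longrightarrow> \<bar>h a z\<bar> \<le> B"
    and q: "\<And>a. a \<in> A \<Longrightarrow> AE x in M. real_cond_exp M F (indicator {z \<in> space M. X z = a}) x = q a x"
  shows "AE x in M. real_cond_exp M F (\<lambda>z. h (X z) z) x = (\<Sum>a\<in>A. h a x * q a x)"
proof -
  interpret sigma_finite_subalgebra M F
    using sub by (intro finite_measure_subalgebra_is_sigma_finite)
      (simp add: finite_measure_subalgebra_def finite_measure_subalgebra_axioms_def finite_measure_axioms)
  define E where "E a = {z \<in> space M. X z = a}" for a
  have h_M: "h a \<in> borel_measurable M" for a by (rule measurable_from_subalg[OF sub h_meas])
  have ind_M: "indicator (E a) \<in> borel_measurable M" for a
    using X_meas by (simp add: E_def)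
  have decomp: "h (X z) z = (\<Sum>a\<in>A. h a z * indicator (E a) z)" if "z \<in> space M" for z
    using A that by (simp add: E_def indicator_def sum.delta' if_distrib[of "\<lambda>x. _ * x"] cong: if_cong)
  have integrable: "integrable M (\<lambda>z. h a z * indicator (E a) z)" for a
  proof (rule integrable_const_bound)
    have "\<bar>h a z * indicator (E a) z\<bar> \<le> B" if "z \<in> space M" for z
      using h_bound[of a z] h_bound[of "X z" z] A(2)[OF that] that by (auto simp: E_def indicator_def)
    then show "AE z in M. norm (h a z * indicator (E a) z) \<le> B" by auto
  qed (intro borel_measurable_times h_M ind_M)
  have sum_M: "(\<lambda>z. \<Sum>a\<in>A. h a z * indicator (E a) z) \<in> borel_measurable M"
    using h_M ind_M by measurable
  then have hX_M: "(\<lambda>z. h (X z) z) \<in> borel_measurable M"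
    by (rule measurable_cong[THEN iffD2, rotated]) (simp add: decomp)
  have "AE x in M. real_cond_exp M F (\<lambda>z. h (X z) z) x
      = real_cond_exp M F (\<lambda>z. \<Sum>a\<in>A. h a z * indicator (E a) z) x"
    using decomp hX_M sum_M by (intro real_cond_exp_cong) auto
  moreover have "AE x in M. real_cond_exp M F (\<lambda>z. \<Sum>a\<in>A. h a z * indicator (E a) z) x
      = (\<Sum>a\<in>A. real_cond_exp M F (\<lambda>z. h a z * indicator (E a) z) x)"
    by (rule real_cond_exp_sum[OF integrable])
  moreover have "AE x in M. \<forall>a\<in>A. real_cond_exp M F (\<lambda>z. h a z * indicator (E a) z) x
      = h a x * real_cond_exp M F (indicator (E a)) x"
    using A(1) by (intro AE_finite_allI real_cond_exp_mult h_meas ind_M integrable)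
  moreover have "AE x in M. \<forall>a\<in>A. real_cond_exp M F (indicator (E a)) x = q a x"
    using A(1) q by (intro AE_finite_allI) (simp_all add: E_def)
  ultimately show ?thesis by eventually_elim simp
qed

lemma cond_exp_vec_transition:
  fixes \<xi> :: "nat \<Rightarrow> 'a \<Rightarrow> 'e::finite" and J :: "nat \<Rightarrow> 'a \<Rightarrow> real ^ 'd"
    and \<Phi> :: "'e \<Rightarrow> real ^ 'd \<Rightarrow> real ^ 'd \<Rightarrow> real ^ 'd"
  assumes "prob_space M"
    and \<xi>_meas: "\<And>n. \<xi> n \<in> measurable M (count_space UNIV)"
    and J_meas: "\<And>n. J n \<in> borel_measurable M"
    and J_steps: "\<And>n x. x \<in> space M \<Longrightarrow> 1 \<le> n \<Longrightarrow> J n x \<in> Vset"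
    and transition: "\<And>n k u. u \<in> Vset \<Longrightarrow>
        AE x in M. real_cond_exp M (filt M \<xi> J n)
            (indicator {x \<in> space M. \<xi> (Suc n) x = k \<and> J (Suc n) x = u}) x
          = P (\<xi> n x) k * p (\<xi> n x) (Spos J n x /\<^sub>R real m) u"
    and \<Phi>_meas: "\<And>k u. \<Phi> k u \<in> borel_measurable borel"
    and \<Phi>_bound: "\<And>k u w. u \<in> Vset \<Longrightarrow> norm (\<Phi> k u w) \<le> B"
  shows "AE x in M. cond_exp_vec M (filt M \<xi> J n)
      (\<lambda>z. \<Phi> (\<xi> (Suc n) z) (J (Suc n) z) (Spos J n z)) x
    = (\<Sum>k\<in>UNIV. \<Sum>u\<in>Vset. (P (\<xi> n x) k * p (\<xi> n x) (Spos J n x /\<^sub>R real m) u) *\<^sub>R \<Phi> k u (Spos J n x))"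
proof -
  interpret prob_space M by fact
  define X where "X z = (\<xi> (Suc n) z, J (Suc n) z)" for z
  define q where "q a x = P (\<xi> n x) (fst a) * p (\<xi> n x) (Spos J n x /\<^sub>R real m) (snd a)" for a x
  have X_meas: "{z \<in> space M. X z = a} \<in> sets M" for a
  proof -
    have "{z \<in> space M. X z = a} = (\<xi> (Suc n) -` {fst a} \<inter> space M) \<inter> (J (Suc n) -` {snd a} \<inter> space M)"
      by (auto simp: X_def)
    then show ?thesis using measurable_sets[OF \<xi>_meas] measurable_sets[OF J_meas] by simp
  qed
  have "AE x in M. real_cond_exp M (filt M \<xi> J n) (\<lambda>z. (\<lambda>a z. \<Phi> (fst a) (snd a) (Spos J n z) $ c) (X z) z) x
      = (\<Sum>a\<in>UNIV \<times> Vset. (\<lambda>a z. \<Phi> (fst a) (snd a) (Spos J n z) $ c) a x * q a x)" for c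
  proof (rule real_cond_exp_finite_outcomes)
    show "subalgebra M (filt M \<xi> J n)" using \<xi>_meas J_meas by (rule subalgebra_filt)
    show "X z \<in> UNIV \<times> Vset" if "z \<in> space M" for z using J_steps[OF that] by (simp add: X_def)
    show "(\<lambda>z. \<Phi> (fst a) (snd a) (Spos J n z) $ c) \<in> borel_measurable (filt M \<xi> J n)" for a
    proof -
      have "(\<lambda>v :: real ^ 'd. v $ c) \<in> borel_measurable borel"
        by (intro borel_measurable_continuous_onI continuous_on_component continuous_on_id)
      with borel_measurable_Spos_filt[OF order_refl] \<Phi>_meas show ?thesis
        by (rule measurable_compose[OF measurable_compose])
    qed
    show "\<bar>\<Phi> (fst a) (snd a) (Spos J n z) $ c\<bar> \<le> B" if "a \<in> UNIV \<times> Vset" for a z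
      using that \<Phi>_bound component_le_norm_cart order.trans by fastforce
    show "AE x in M. real_cond_exp M (filt M \<xi> J n) (indicator {z \<in> space M. X z = a}) x = q a x"
      if "a \<in> UNIV \<times> Vset" for a
      using that transition[of "snd a" n "fst a"] by (auto simp: X_def q_def prod_eq_iff)
  qed (simp_all add: finite_Vset X_meas)
  then have "AE x in M. \<forall>c\<in>UNIV. real_cond_exp M (filt M \<xi> J n)
      (\<lambda>z. \<Phi> (\<xi> (Suc n) z) (J (Suc n) z) (Spos J n z) $ c) x
      = (\<Sum>a\<in>UNIV \<times> Vset. \<Phi> (fst a) (snd a) (Spos J n x) $ c * q a x)"
    by (intro AE_finite_allI) (simp_all add: X_def)
  then show ?thesis
    by eventually_elim (simp add: cond_exp_vec_def vec_eq_iff q_def sum.cartesian_product split_def mult_ac)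
qed

section \<open>The corrector and the drift\<close>

context
  fixes P :: "'e::finite \<Rightarrow> 'e \<Rightarrow> real"
    and \<mu> :: "'e \<Rightarrow> real"
    and p :: "'e \<Rightarrow> real ^ 'd \<Rightarrow> real ^ 'd \<Rightarrow> real"
    and Lp :: real
  assumes P_stoch: "stochastic P"
    and P_irr: "irreducible_mat P"
    and P_aper: "aperiodic_mat P"
    and mu_inv: "invariant_prob P \<mu>"
    and p_nonneg: "\<And>k y u. u \<in> Vset \<Longrightarrow> 0 \<le> p k y u"
    and p_sum: "\<And>k y. (\<Sum>u\<in>Vset. p k y u) = 1"
    and p_lipschitz: "\<And>k u. u \<in> Vset \<Longrightarrow> Lp-lipschitz_on UNIV (\<lambda>y. p k y u)"
    and centered: "\<And>y. (\<Sum>k\<in>UNIV. \<mu> k *\<^sub>R gdrift p k y) = 0"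
begin

lemma summable_vcorr_series: "summable (\<lambda>n. matvec (mpow P n) (\<lambda>j. gdrift p j y) i)"
proof (rule potential_bound[OF P_stoch P_irr P_aper mu_inv])
  fix C :: real
  assume pot: "\<And>(H :: 'e \<Rightarrow> real ^ 'd) B i. (\<Sum>k\<in>UNIV. \<mu> k *\<^sub>R H k) = 0 \<Longrightarrow>
    (\<And>j. norm (H j) \<le> B) \<Longrightarrow>
    summable (\<lambda>n. matvec (mpow P n) H i) \<and> norm (potential P H i) \<le> C * B"
  from pot[OF centered norm_gdrift_le_1] show ?thesis using p_nonneg p_sum by blast
qed

lemma vcorr_bounded: obtains Vb where "\<And>i y. norm (vcorr P p i y) \<le> Vb"
proof (rule potential_bound[OF P_stoch P_irr P_aper mu_inv])
  fix C :: real
  assume pot: "\<And>(H :: 'e \<Rightarrow> real ^ 'd) B i. (\<Sum>k\<in>UNIV. \<mu> k *\<^sub>R H k) = 0 \<Longrightarrow>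
    (\<And>j. norm (H j) \<le> B) \<Longrightarrow>
    summable (\<lambda>n. matvec (mpow P n) H i) \<and> norm (potential P H i) \<le> C * B"
  from pot[OF centered norm_gdrift_le_1] have "norm (vcorr P p i y) \<le> C" for i y
    using p_nonneg p_sum by (simp add: vcorr_eq_potential)
  then show thesis by (rule that)
qed

lemma vcorr_lipschitz: obtains Lv where "\<And>i. Lv-lipschitz_on UNIV (vcorr P p i)"
proof (rule potential_bound[OF P_stoch P_irr P_aper mu_inv])
  fix C :: real
  assume C: "0 \<le> C"
    and pot: "\<And>(H :: 'e \<Rightarrow> real ^ 'd) B i. (\<Sum>k\<in>UNIV. \<mu> k *\<^sub>R H k) = 0 \<Longrightarrow>
      (\<And>j. norm (H j) \<le> B) \<Longrightarrow>
      summable (\<lambda>n. matvec (mpow P n) H i) \<and> norm (potential P H i) \<le> C * B"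
  define Lg where "Lg = real (card (Vset :: (real ^ 'd) set)) * Lp"
  have g_lip: "Lg-lipschitz_on UNIV (gdrift p k)" for k
    unfolding Lg_def by (rule lipschitz_gdrift[OF p_lipschitz])
  have "(C * Lg)-lipschitz_on UNIV (vcorr P p i)" for i
  proof (rule lipschitz_onI)
    fix y y' :: "real ^ 'd"
    have "vcorr P p i y - vcorr P p i y' = potential P (\<lambda>j. gdrift p j y - gdrift p j y') i"
      unfolding vcorr_eq_potential by (intro potential_diff summable_vcorr_series)
    also have "norm \<dots> \<le> C * (Lg * dist y y')"
    proof (rule pot[THEN conjunct2])
      show "(\<Sum>k\<in>UNIV. \<mu> k *\<^sub>R (gdrift p k y - gdrift p k y')) = 0"
        using centered[of y] centered[of y'] by (simp add: scaleR_diff_right sum_subtractf)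
      show "norm (gdrift p j y - gdrift p j y') \<le> Lg * dist y y'" for j
        using lipschitz_onD[OF g_lip, of y y'] by (simp add: dist_norm)
    qed
    finally show "dist (vcorr P p i y) (vcorr P p i y') \<le> C * Lg * dist y y'"
      by (simp add: dist_norm mult.assoc)
    show "0 \<le> C * Lg" using C lipschitz_on_nonneg[OF g_lip] by simp
  qed
  then show thesis by (rule that)
qed

lemma vcorr_Poisson: "matvec P (\<lambda>k. vcorr P p k y) i = vcorr P p i y - gdrift p i y"
  unfolding vcorr_eq_potential by (intro potential_Poisson summable_vcorr_series)

lemma mean_step_vcorr:
  "(\<Sum>k\<in>UNIV. \<Sum>u\<in>Vset. (P i k * p i y u) *\<^sub>R (u + vcorr P p k (y + u /\<^sub>R real m)))
     = vcorr P p i y + bdrift P p m i y"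
proof -
  define h where "h z = vcorr P p i z - gdrift p i z" for z
  have step: "(\<Sum>k\<in>UNIV. P i k *\<^sub>R (u + vcorr P p k z)) = u + h z" for u z
  proof -
    have "(\<Sum>k\<in>UNIV. P i k *\<^sub>R (u + vcorr P p k z))
        = (\<Sum>k\<in>UNIV. P i k) *\<^sub>R u + matvec P (\<lambda>k. vcorr P p k z) i"
      by (simp add: matvec_def scaleR_add_right sum.distrib scaleR_sum_left)
    also have "\<dots> = u + h z"
      using P_stoch by (simp add: stochastic_def vcorr_Poisson h_def)
    finally show ?thesis .
  qed
  have "(\<Sum>k\<in>UNIV. \<Sum>u\<in>Vset. (P i k * p i y u) *\<^sub>R (u + vcorr P p k (y + u /\<^sub>R real m)))
      = (\<Sum>u\<in>Vset. p i y u *\<^sub>R (\<Sum>k\<in>UNIV. P i k *\<^sub>R (u + vcorr P p k (y + u /\<^sub>R real m))))"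
    by (subst sum.swap) (simp add: scaleR_sum_right mult.commute)
  also have "\<dots> = gdrift p i y + (\<Sum>u\<in>Vset. p i y u *\<^sub>R h (y + u /\<^sub>R real m))"
    unfolding step by (simp add: gdrift_def scaleR_add_right sum.distrib)
  also have "(\<Sum>u\<in>Vset. p i y u *\<^sub>R h (y + u /\<^sub>R real m)) = bdrift P p m i y + h y"
    unfolding bdrift_def h_def[symmetric]
    by (simp add: scaleR_diff_right sum_subtractf scaleR_sum_left[symmetric] p_sum)
  finally show ?thesis by (simp add: h_def)
qed

lemma bdrift_bound: obtains C where "\<And>m i y. norm (bdrift P p m i y) \<le> C / real m"
proof -
  obtain Lv where "\<And>i. Lv-lipschitz_on UNIV (vcorr P p i)" using vcorr_lipschitz by blast
  then have lip: "(Lv + real (card (Vset :: (real ^ 'd) set)) * Lp)-lipschitz_on UNIV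
      (\<lambda>z. vcorr P p i z - gdrift p i z)" for i
    by (intro lipschitz_on_diff lipschitz_gdrift p_lipschitz)
  have "norm (bdrift P p m i y) \<le> (Lv + real (card (Vset :: (real ^ 'd) set)) * Lp) / real m"
    for m i y by (rule norm_bdrift_le[OF p_nonneg p_sum lip])
  then show ?thesis by (rule that)
qed


lemma cond_exp_vec_corrector_step:
  fixes \<xi> :: "nat \<Rightarrow> 'a \<Rightarrow> 'e" and J :: "nat \<Rightarrow> 'a \<Rightarrow> real ^ 'd"
  assumes M: "prob_space M"
    and \<xi>_meas: "\<And>n. \<xi> n \<in> measurable M (count_space UNIV)"
    and J_meas: "\<And>n. J n \<in> borel_measurable M"
    and J_steps: "\<And>n x. x \<in> space M \<Longrightarrow> 1 \<le> n \<Longrightarrow> J n x \<in> Vset"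
    and transition: "\<And>n k u. u \<in> Vset \<Longrightarrow>
        AE x in M. real_cond_exp M (filt M \<xi> J n)
            (indicator {x \<in> space M. \<xi> (Suc n) x = k \<and> J (Suc n) x = u}) x
          = P (\<xi> n x) k * p (\<xi> n x) (Spos J n x /\<^sub>R real m) u"
  shows "AE x in M. cond_exp_vec M (filt M \<xi> J n)
      (\<lambda>z. J (Suc n) z + vcorr P p (\<xi> (Suc n) z) (Spos J (Suc n) z /\<^sub>R real m)) x
    = vcorr P p (\<xi> n x) (Spos J n x /\<^sub>R real m) + bdrift P p m (\<xi> n x) (Spos J n x /\<^sub>R real m)"
proof -
  obtain Vb where Vb: "\<And>i y. norm (vcorr P p i y) \<le> Vb" using vcorr_bounded by blast
  obtain Lv where Lv: "\<And>i. Lv-lipschitz_on UNIV (vcorr P p i)" using vcorr_lipschitz by blast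
  define \<Phi> where "\<Phi> k u w = u + vcorr P p k (w /\<^sub>R real m + u /\<^sub>R real m)" for k u w
  have \<Phi>_step: "(\<lambda>z. \<Phi> (\<xi> (Suc n) z) (J (Suc n) z) (Spos J n z))
      = (\<lambda>z. J (Suc n) z + vcorr P p (\<xi> (Suc n) z) (Spos J (Suc n) z /\<^sub>R real m))"
    by (simp add: \<Phi>_def scaleR_add_right)
  have \<Phi>_mean: "(\<Sum>k\<in>UNIV. \<Sum>u\<in>Vset. (P i k * p i (w /\<^sub>R real m) u) *\<^sub>R \<Phi> k u w)
      = vcorr P p i (w /\<^sub>R real m) + bdrift P p m i (w /\<^sub>R real m)" for i w
    unfolding \<Phi>_def by (rule mean_step_vcorr)
  have "AE x in M. cond_exp_vec M (filt M \<xi> J n)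
      (\<lambda>z. \<Phi> (\<xi> (Suc n) z) (J (Suc n) z) (Spos J n z)) x
    = (\<Sum>k\<in>UNIV. \<Sum>u\<in>Vset. (P (\<xi> n x) k * p (\<xi> n x) (Spos J n x /\<^sub>R real m) u) *\<^sub>R \<Phi> k u (Spos J n x))"
  proof (rule cond_exp_vec_transition[OF M \<xi>_meas J_meas J_steps transition])
    show "\<Phi> k u \<in> borel_measurable borel" for k u
    proof -
      have "continuous_on UNIV (\<lambda>w. vcorr P p k (w /\<^sub>R real m + u /\<^sub>R real m))"
        by (rule continuous_on_compose2[OF lipschitz_on_continuous_on[OF Lv]])
          (auto intro!: continuous_intros)
      then have "continuous_on UNIV (\<Phi> k u)" unfolding \<Phi>_def by (intro continuous_intros)
      then show ?thesis by (rule borel_measurable_continuous_onI)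
    qed
    show "norm (\<Phi> k u w) \<le> 1 + Vb" if "u \<in> Vset" for k u w
      unfolding \<Phi>_def by (rule order.trans[OF norm_triangle_ineq]) (simp add: norm_Vset[OF that] Vb)
  qed
  then show ?thesis unfolding \<Phi>_step \<Phi>_mean .
qed

end

theorem proposition4p2:
  fixes P :: "'e::finite \<Rightarrow> 'e \<Rightarrow> real"
    and \<mu> :: "'e \<Rightarrow> real"
    and p :: "'e \<Rightarrow> real ^ 'd \<Rightarrow> real ^ 'd \<Rightarrow> real"
    and Dp :: "'e \<Rightarrow> real ^ 'd \<Rightarrow> real ^ 'd \<Rightarrow> ((real ^ 'd) \<Rightarrow>\<^sub>L real)"
    and D2p :: "'e \<Rightarrow> real ^ 'd \<Rightarrow> real ^ 'd \<Rightarrow> ((real ^ 'd) \<Rightarrow>\<^sub>L ((real ^ 'd) \<Rightarrow>\<^sub>L real))"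
    and M :: "'a measure"
    and \<xi> :: "nat \<Rightarrow> 'a \<Rightarrow> 'e"
    and J :: "nat \<Rightarrow> 'a \<Rightarrow> real ^ 'd"
    and m :: nat
  assumes P_stoch: "stochastic P"
    and P_irr: "irreducible_mat P"
    and P_aper: "aperiodic_mat P"
    and mu_inv: "invariant_prob P \<mu>"
    and p_nonneg: "\<And>k y u. u \<in> Vset \<Longrightarrow> 0 \<le> p k y u"
    and p_sum: "\<And>k y. (\<Sum>u\<in>Vset. p k y u) = 1"
    and p_D1: "\<And>k u y. u \<in> Vset \<Longrightarrow>
                 ((\<lambda>z. p k z u) has_derivative blinfun_apply (Dp k u y)) (at y)"
    and p_D2: "\<And>k u y. u \<in> Vset \<Longrightarrow>
                 (Dp k u has_derivative blinfun_apply (D2p k u y)) (at y)"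
    and p_D2_cont: "\<And>k u. u \<in> Vset \<Longrightarrow> continuous_on UNIV (D2p k u)"
    and p_D1_bdd: "\<And>k u. u \<in> Vset \<Longrightarrow> bounded (range (Dp k u))"
    and p_D2_bdd: "\<And>k u. u \<in> Vset \<Longrightarrow> bounded (range (D2p k u))"
    and centered: "\<And>y. (\<Sum>k\<in>UNIV. \<mu> k *\<^sub>R gdrift p k y) = 0"
    and m_pos: "1 \<le> m"
    and M_prob: "prob_space M"
    and xi_meas: "\<And>n. \<xi> n \<in> measurable M (count_space UNIV)"
    and J_meas: "\<And>n. J n \<in> borel_measurable M"
    and J_steps: "\<And>n x. x \<in> space M \<Longrightarrow> 1 \<le> n \<Longrightarrow> J n x \<in> Vset"
    and transition: "\<And>n k u. u \<in> Vset \<Longrightarrow>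
        AE x in M. real_cond_exp M (filt M \<xi> J n)
            (indicator {x \<in> space M. \<xi> (Suc n) x = k \<and> J (Suc n) x = u}) x
          = P (\<xi> n x) k * p (\<xi> n x) (Spos J n x /\<^sub>R real m) u"
  shows "(\<forall>n. AE x in M.
            Spos J (Suc n) x + vcorr P p (\<xi> (Suc n) x) (Spos J (Suc n) x /\<^sub>R real m)
          = Spos J n x + vcorr P p (\<xi> n x) (Spos J n x /\<^sub>R real m)
            + bdrift P p m (\<xi> n x) (Spos J n x /\<^sub>R real m)
            + ((J (Suc n) x + vcorr P p (\<xi> (Suc n) x) (Spos J (Suc n) x /\<^sub>R real m))
               - cond_exp_vec M (filt M \<xi> J n)
                   (\<lambda>z. J (Suc n) z + vcorr P p (\<xi> (Suc n) z) (Spos J (Suc n) z /\<^sub>R real m)) x))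
       \<and> (\<exists>C. \<forall>m'::nat. 1 \<le> m' \<longrightarrow> (\<forall>i y. norm (bdrift P p m' i y) \<le> C / real m'))"
proof -
  \<comment> \<open>Neither the second derivatives of p nor m \<ge> 1 are needed: for m = 0 the junk value
    u /R 0 = 0 makes every increment in bdrift vanish.\<close>
  have "\<exists>L. \<forall>k u. u \<in> Vset \<longrightarrow> L-lipschitz_on UNIV (\<lambda>y. p k y u)"
    using p_D1 p_D1_bdd by (rule uniformly_lipschitz_step_probabilities)
  then obtain Lp where p_lip: "\<And>k u. u \<in> Vset \<Longrightarrow> Lp-lipschitz_on UNIV (\<lambda>y. p k y u)" by blast
  note walk = P_stoch P_irr P_aper mu_inv p_nonneg p_sum p_lip centered
  have cond_exp: "AE x in M. cond_exp_vec M (filt M \<xi> J n)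
      (\<lambda>z. J (Suc n) z + vcorr P p (\<xi> (Suc n) z) (Spos J (Suc n) z /\<^sub>R real m)) x
    = vcorr P p (\<xi> n x) (Spos J n x /\<^sub>R real m) + bdrift P p m (\<xi> n x) (Spos J n x /\<^sub>R real m)" for n
    by (rule cond_exp_vec_corrector_step[OF walk M_prob xi_meas J_meas J_steps transition])
  obtain C where C: "\<And>m i y. norm (bdrift P p m i y) \<le> C / real m" using bdrift_bound[OF walk] by blast
  show ?thesis
  proof (intro conjI allI eventually_mono[OF cond_exp])
    show "\<exists>C. \<forall>m'::nat. 1 \<le> m' \<longrightarrow> (\<forall>i y. norm (bdrift P p m' i y) \<le> C / real m')"
      using C by blast
  qed (simp add: algebra_simps)
qed

end
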